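(* For every pair $(a,b)\in\{(\pm\tfrac12,\pm\tfrac12)\}$ and every $n\geq1$, $$\sup_{\theta\in[0,\pi]^n}\rho_n^{a,b}(\theta)\leq\frac{(2e/\pi)^n}{\sqrt{2\pi n}}.$$
   Context: $\rho_n^{a,b}$ is the probability density on $[0,\pi]^n$ given by $\rho_n^{--}(\theta)=\frac{2^{(n-1)^2}}{n!\pi^n}\prod_{j<k}(\cos\theta_j-\cos\theta_k)^2$, $\rho_n^{++}(\theta)=\frac{2^{n^2}}{n!\pi^n}\prod_{j}\sin^2\theta_j\prod_{j<k}(\cos\theta_j-\cos\theta_k)^2$, $\rho_n^{-+}(\theta)=\frac{2^{n^2}}{n!\pi^n}\prod_{j}\cos^2\frac{\theta_j}{2}\prod_{j<k}(\cos\theta_j-\cos\theta_k)^2$, $\rho_n^{+-}(\theta)=\frac{2^{n^2}}{n!\pi^n}\prod_{j}\sin^2\frac{\theta_j}{2}\prod_{j<k}(\cos\theta_j-\cos\theta_k)^2$, where signs abbreviate $a,b=\pm\frac12$. *)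

theory Defs
  imports "HOL-Analysis.Analysis"
begin

definition vdm_sq :: "nat \<Rightarrow> (nat \<Rightarrow> real) \<Rightarrow> real" where
  "vdm_sq n th = (\<Prod>k<n. \<Prod>j<k. (cos (th j) - cos (th k))^2)"

definition rho :: "nat \<Rightarrow> real \<Rightarrow> real \<Rightarrow> (nat \<Rightarrow> real) \<Rightarrow> real" where
  "rho n a b th =
    (if a = -1/2 \<and> b = -1/2 then
       2 ^ ((n - 1)^2) / (fact n * pi ^ n) * vdm_sq n th
     else if a = 1/2 \<and> b = 1/2 then
       2 ^ (n^2) / (fact n * pi ^ n) * (\<Prod>j<n. (sin (th j))^2) * vdm_sq n th
     else if a = -1/2 \<and> b = 1/2 then
       2 ^ (n^2) / (fact n * pi ^ n) * (\<Prod>j<n. (cos (th j / 2))^2) * vdm_sq n th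
     else
       2 ^ (n^2) / (fact n * pi ^ n) * (\<Prod>j<n. (sin (th j / 2))^2) * vdm_sq n th)"

end

theory Submission
  imports Defs "Jordan_Normal_Form.Determinant"
begin

text \<open>Each density is a constant times the square of the determinant of the matrix
  (w (th j) * p k (cos (th j))) with j, k < n, where p k are the Chebyshev polynomials of the
  appropriate kind and w is 1, sin, cos (t/2) or sin (t/2): the rows are then the values of
  cos (k t), sin ((k+1) t), cos ((k+1/2) t) or sin ((k+1/2) t), all bounded by 1, and the
  determinant factors into the weights, the leading coefficients of the p k (powers of 2, which
  absorb the power of 2 in the normalisation) and a Vandermonde determinant in the cos (th j).
  Hadamard's inequality bounds the squared determinant by n ^ n, so the density is at most
  2 ^ n * n ^ n / (n! * pi ^ n), and the lower Stirling bound n! \<ge> sqrt (2 pi n) (n/e) ^ n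
  gives the claim.  That bound holds because n!^2 e^(2n) / n^(2n+1) decreases, and its
  limit is identified as 2 pi through Wallis' product.\<close>

section \<open>Lower Stirling bound\<close>

lemma ln_add_one_ge:
  fixes y :: real
  assumes "0 \<le> y"
  shows "2 * y / (2 + y) \<le> ln (1 + y)"
proof -
  let ?f = "\<lambda>t::real. ln (1 + t) - 2 * t / (2 + t)"
  have "?f 0 \<le> ?f y"
  proof (rule DERIV_nonneg_imp_nondecreasing[OF assms])
    fix x :: real assume x: "0 \<le> x" "x \<le> y"
    have "(?f has_real_derivative (1 / (1 + x) - 4 / (2 + x)^2)) (at x)"
      using x by (auto intro!: derivative_eq_intros simp: power2_eq_square field_simps)
    moreover have "4 / (2 + x)^2 \<le> 1 / (1 + x)"
      using x by (simp add: divide_simps power2_eq_square algebra_simps)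
    ultimately show "\<exists>d. (?f has_real_derivative d) (at x) \<and> 0 \<le> d" by auto
  qed
  then show ?thesis by simp
qed

lemma one_plus_inverse_pow_bounds:
  assumes "n \<ge> 1"
  shows "exp 2 \<le> (1 + 1 / real n) ^ (2*n+1)"
    and "(1 + 1 / real n) ^ (2*n+1) \<le> exp (2 + 1 / real n)"
proof -
  have n: "real n > 0" using assms by simp
  have "(1 + 1 / real n) ^ (2*n+1) = exp (ln (1 + 1 / real n)) ^ (2*n+1)"
    using n by (simp add: add_pos_pos)
  also have "\<dots> = exp (real (2*n+1) * ln (1 + 1 / real n))"
    by (rule exp_of_nat_mult[symmetric])
  also have "\<dots> = exp ((2 * real n + 1) * ln (1 + 1 / real n))"
    by simp
  finally have pow: "(1 + 1 / real n) ^ (2*n+1) = exp ((2 * real n + 1) * ln (1 + 1 / real n))" .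
  have "2 * (1 / real n) / (2 + 1 / real n) \<le> ln (1 + 1 / real n)"
    by (rule ln_add_one_ge) simp
  moreover have "2 * (1 / real n) / (2 + 1 / real n) = 2 / (2 * real n + 1)"
    using n by (simp add: field_simps)
  ultimately have "2 \<le> (2 * real n + 1) * ln (1 + 1 / real n)"
    using n by (simp add: field_simps)
  then show "exp 2 \<le> (1 + 1 / real n) ^ (2*n+1)"
    unfolding pow by simp
  have "ln (1 + 1 / real n) \<le> 1 / real n"
    by (rule ln_add_one_self_le_self) simp
  then have "(2 * real n + 1) * ln (1 + 1 / real n) \<le> (2 * real n + 1) * (1 / real n)"
    using n by (intro mult_left_mono) auto
  also have "\<dots> = 2 + 1 / real n"
    using n by (simp add: field_simps)
  finally show "(1 + 1 / real n) ^ (2*n+1) \<le> exp (2 + 1 / real n)"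
    unfolding pow by simp
qed

definition stirling_sq :: "nat \<Rightarrow> real" where
  "stirling_sq n = (fact n)^2 * exp (2 * real n) / real n ^ (2*n+1)"

lemma stirling_sq_pos: "n \<ge> 1 \<Longrightarrow> stirling_sq n > 0"
  by (simp add: stirling_sq_def)

lemma stirling_sq_Suc:
  assumes "n \<ge> 1"
  shows "stirling_sq (Suc n) * (1 + 1 / real n) ^ (2*n+1) = stirling_sq n * exp 2"
proof -
  define m where "m = real n + 1"
  have n: "real n > 0" and m: "m > 0" using assms by (simp_all add: m_def)
  have S: "stirling_sq (Suc n) = (m * fact n)^2 * (exp (2 * real n) * exp 2) / (m^2 * m ^ (2*n+1))"
    unfolding stirling_sq_def m_def by (simp add: exp_add[symmetric] algebra_simps flip: power_add)
  have P: "(1 + 1 / real n) ^ (2*n+1) = m ^ (2*n+1) / real n ^ (2*n+1)"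
    using n by (simp add: m_def field_simps power_divide)
  have "stirling_sq n = (fact n)^2 * exp (2 * real n) / real n ^ (2*n+1)"
    by (rule stirling_sq_def)
  then show ?thesis
    unfolding S P using n m by (simp add: field_simps power2_eq_square)
qed

lemma stirling_sq_Suc_le:
  assumes "n \<ge> 1"
  shows "stirling_sq (Suc n) \<le> stirling_sq n"
proof -
  have "stirling_sq (Suc n) * exp 2 \<le> stirling_sq (Suc n) * (1 + 1 / real n) ^ (2*n+1)"
    using one_plus_inverse_pow_bounds(1)[OF assms] stirling_sq_pos[of "Suc n"]
    by (intro mult_left_mono) auto
  also have "\<dots> = stirling_sq n * exp 2"
    by (rule stirling_sq_Suc[OF assms])
  finally show ?thesis by simp
qed

lemma stirling_sq_Suc_ge:
  assumes "n \<ge> 1"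
  shows "stirling_sq n * exp (- 1 / real n) \<le> stirling_sq (Suc n)"
proof -
  have "stirling_sq n * exp 2 = stirling_sq (Suc n) * (1 + 1 / real n) ^ (2*n+1)"
    by (rule stirling_sq_Suc[OF assms, symmetric])
  also have "\<dots> \<le> stirling_sq (Suc n) * exp (2 + 1 / real n)"
    using one_plus_inverse_pow_bounds(2)[OF assms] stirling_sq_pos[of "Suc n"]
    by (intro mult_left_mono) auto
  finally have "stirling_sq n * exp 2 \<le> stirling_sq (Suc n) * exp (2 + 1 / real n)" .
  then show ?thesis
    by (simp add: exp_add exp_diff exp_minus field_simps)
qed

lemma stirling_sq_add_ge:
  assumes "n \<ge> 1"
  shows "stirling_sq n * exp (- real k / real n) \<le> stirling_sq (n + k)"
proof (induction k)
  case 0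
  then show ?case by simp
next
  case (Suc k)
  have "stirling_sq n * exp (- real (Suc k) / real n)
      = stirling_sq n * exp (- real k / real n) * exp (- 1 / real n)"
    by (simp add: exp_add[symmetric] add_divide_distrib diff_divide_distrib)
  also have "\<dots> \<le> stirling_sq (n + k) * exp (- 1 / real n)"
    using Suc.IH by (intro mult_right_mono) auto
  also have "\<dots> \<le> stirling_sq (n + k) * exp (- 1 / real (n + k))"
    using assms stirling_sq_pos[of "n + k"] by (intro mult_left_mono) (auto simp: frac_le)
  also have "\<dots> \<le> stirling_sq (Suc (n + k))"
    by (rule stirling_sq_Suc_ge) (use assms in simp)
  finally show ?case by simp
qed

lemma wallis_prod_eq:
  "(\<Prod>k=1..n. 4 * real k ^ 2 / (4 * real k ^ 2 - 1)) =
     (2 ^ (2*n) * (fact n)^2)^2 / ((fact (2*n))^2 * (2 * real n + 1))"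
proof (induction n)
  case 0
  then show ?case by simp
next
  case (Suc n)
  define N where "N = real n"
  have fact2: "fact (2 * Suc n) = (2*N + 2) * (2*N + 1) * (fact (2*n) :: real)"
    by (simp add: N_def fact_Suc algebra_simps)
  have denom: "4 * real (Suc n) ^ 2 - 1 = (2*N + 1) * (2*N + 3)"
    by (simp add: N_def algebra_simps power2_eq_square)
  have step: "(P * F^2)^2 / (G^2 * A) * (4 * C^2 / (A * B))
      = (4 * P * (C * F)^2)^2 / ((2 * C * A * G)^2 * B)"
    if "G > 0" "A > 0" "B > 0" "C > 0" for P F G A B C :: real
    using that by (simp add: field_simps power2_eq_square)
  have "(\<Prod>k=1..Suc n. 4 * real k ^ 2 / (4 * real k ^ 2 - 1))
      = (\<Prod>k=1..n. 4 * real k ^ 2 / (4 * real k ^ 2 - 1)) * (4 * real (Suc n) ^ 2 / (4 * real (Suc n) ^ 2 - 1))"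
    by (simp add: prod.nat_ivl_Suc')
  also have "\<dots> = (2 ^ (2*n) * (fact n)^2)^2 / ((fact (2*n))^2 * (2*N + 1))
      * (4 * (N + 1)^2 / ((2*N + 1) * (2*N + 3)))"
    unfolding Suc.IH denom by (simp add: N_def)
  also have "\<dots> = (4 * 2 ^ (2*n) * ((N + 1) * fact n)^2)^2
      / ((2 * (N + 1) * (2*N + 1) * fact (2*n))^2 * (2*N + 3))"
    by (rule step) (auto simp: N_def)
  also have "\<dots> = (2 ^ (2 * Suc n) * (fact (Suc n))^2)^2 / ((fact (2 * Suc n))^2 * (2*N + 3))"
    unfolding fact2 by (simp add: N_def algebra_simps)
  finally show ?case by (simp add: N_def algebra_simps)
qed

lemma stirling_sq_ratio_eq:
  assumes "n \<ge> 1"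
  shows "stirling_sq n ^ 2 / stirling_sq (2*n) =
     2 * (\<Prod>k=1..n. 4 * real k ^ 2 / (4 * real k ^ 2 - 1)) * ((2 * real n + 1) / real n)"
proof -
  have ratio: "(F^2 * E / (T * N))^2 / (G^2 * E^2 / (T^2 * P^2 * (2*N)))
      = 2 * ((P * F^2)^2 / (G^2 * A)) * (A / N)"
    if "F > 0" "G > 0" "E > 0" "N > 0" "T > 0" "P > 0" "A > 0" for F G E N T P A :: real
    using that by (simp add: field_simps power2_eq_square)
  have "exp (2 * real (2*n)) = (exp (2 * real n))^2"
    by (simp add: power2_eq_square exp_add[symmetric])
  moreover have "real (2*n) ^ (2 * (2*n) + 1) = (real n ^ (2*n))^2 * (2 ^ (2*n))^2 * (2 * real n)"
    by (simp add: power_mult_distrib flip: power_mult power_add)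
  moreover have "real n ^ (2*n+1) = real n ^ (2*n) * real n" by simp
  ultimately show ?thesis
    unfolding wallis_prod_eq stirling_sq_def using assms by (simp only:) (rule ratio; simp)
qed

lemma stirling_sq_ratio_tendsto:
  "(\<lambda>m. stirling_sq (Suc m) ^ 2 / stirling_sq (2 * Suc m)) \<longlonglongrightarrow> 2 * pi"
proof -
  have "(\<lambda>m. (2 * real (Suc m) + 1) / real (Suc m)) = (\<lambda>m. 2 + 1 / real (Suc m))"
    by (auto simp: field_simps)
  moreover have "(\<lambda>m. 2 + 1 / real (Suc m)) \<longlonglongrightarrow> 2 + 0"
    by (intro tendsto_intros LIMSEQ_Suc[OF lim_inverse_n'])
  ultimately have "(\<lambda>m. (2 * real (Suc m) + 1) / real (Suc m)) \<longlonglongrightarrow> 2"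
    by simp
  with LIMSEQ_Suc[OF wallis]
  have "(\<lambda>m. 2 * (\<Prod>k=1..Suc m. 4 * real k ^ 2 / (4 * real k ^ 2 - 1))
            * ((2 * real (Suc m) + 1) / real (Suc m))) \<longlonglongrightarrow> 2 * (pi / 2) * 2"
    by (intro tendsto_intros)
  moreover have "stirling_sq (Suc m) ^ 2 / stirling_sq (2 * Suc m)
      = 2 * (\<Prod>k=1..Suc m. 4 * real k ^ 2 / (4 * real k ^ 2 - 1))
        * ((2 * real (Suc m) + 1) / real (Suc m))" for m
    by (rule stirling_sq_ratio_eq) simp
  ultimately show ?thesis
    by (simp add: mult.commute)
qed

lemma stirling_sq_ge_two_pi:
  assumes "n \<ge> 1"
  shows "2 * pi \<le> stirling_sq n"
proof -
  define t where "t m = stirling_sq (Suc m)" for m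
  have "decseq t"
    unfolding t_def by (rule decseq_SucI) (simp add: stirling_sq_Suc_le)
  moreover have "\<forall>m. 0 \<le> t m"
    unfolding t_def using stirling_sq_pos by (auto intro: less_imp_le)
  ultimately obtain M where tM: "t \<longlonglongrightarrow> M" and M_le: "\<And>m. M \<le> t m"
    using decseq_convergent by blast
  \<comment> \<open>stirling_sq (2 m) \<ge> stirling_sq m / e keeps the limit M away from 0\<close>
  have ratio_le: "stirling_sq (Suc m) ^ 2 / stirling_sq (2 * Suc m) \<le> exp 1 * t m" for m
  proof -
    have pos: "stirling_sq (Suc m) > 0" "stirling_sq (2 * Suc m) > 0"
      by (simp_all add: stirling_sq_pos)
    have "stirling_sq (Suc m) * exp (- 1) \<le> stirling_sq (2 * Suc m)"
      using stirling_sq_add_ge[of "Suc m" "Suc m"] by (simp add: mult_2 del: of_nat_Suc)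
    then have "stirling_sq (Suc m) ^ 2 / stirling_sq (2 * Suc m)
        \<le> stirling_sq (Suc m) ^ 2 / (stirling_sq (Suc m) * exp (- 1))"
      using pos by (intro divide_left_mono) auto
    also have "\<dots> = exp 1 * t m"
      using pos by (simp add: t_def power2_eq_square exp_minus field_simps)
    finally show ?thesis .
  qed
  have "2 * pi \<le> exp 1 * M"
    using ratio_le by (intro LIMSEQ_le[OF stirling_sq_ratio_tendsto tendsto_mult[OF tendsto_const tM]]) auto
  then have "M > 0"
    using pi_gt_zero by (smt (verit) exp_gt_zero mult_nonneg_nonpos)
  have "(\<lambda>m. t (2*m + 1)) \<longlonglongrightarrow> M"
    by (rule LIMSEQ_subseq_LIMSEQ[OF tM, unfolded o_def]) (auto simp: strict_mono_def)
  with tM \<open>M > 0\<close> have "(\<lambda>m. t m ^ 2 / t (2*m + 1)) \<longlonglongrightarrow> M^2 / M"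
    by (intro tendsto_intros) auto
  then have "(\<lambda>m. stirling_sq (Suc m) ^ 2 / stirling_sq (2 * Suc m)) \<longlonglongrightarrow> M"
    using \<open>M > 0\<close> by (simp add: t_def power2_eq_square)
  then have "M = 2 * pi"
    using stirling_sq_ratio_tendsto LIMSEQ_unique by blast
  then show ?thesis
    using M_le[of "n - 1"] assms by (simp add: t_def)
qed

lemma fact_lower_bound_stirling:
  assumes "n \<ge> 1"
  shows "sqrt (2 * pi * real n) * real n ^ n \<le> fact n * exp 1 ^ n"
proof -
  have n: "real n > 0" using assms by simp
  have "exp (2 * real n) = (exp 1 ^ n)^2"
    by (simp add: exp_of_nat_mult[symmetric] power_mult[symmetric] mult.commute)
  then have "2 * pi * real n * (real n ^ n)^2 \<le> (fact n * exp 1 ^ n)^2"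
    using stirling_sq_ge_two_pi[OF assms] n
    by (simp add: stirling_sq_def pos_le_divide_eq power_mult_distrib algebra_simps
        flip: power_mult)
  then have "sqrt (2 * pi * real n * (real n ^ n)^2) \<le> sqrt ((fact n * exp 1 ^ n)^2)"
    by (rule real_sqrt_le_mono)
  then show ?thesis
    using n by (simp add: real_sqrt_mult)
qed

section \<open>Vandermonde determinant and Hadamard's inequality\<close>

lemma det_mat_scale_rows:
  fixes f :: "nat \<Rightarrow> nat \<Rightarrow> 'a :: comm_ring_1"
  shows "det (mat n n (\<lambda>(j,k). c j * f j k)) = (\<Prod>j<n. c j) * det (mat n n (\<lambda>(j,k). f j k))"
proof -
  have rows: "(\<lambda>i. vec n (f i)) \<in> {0..<n} \<rightarrow> carrier_vec n" by auto
  have "mat n n (\<lambda>(j,k). c j * f j k) = mat\<^sub>r n n (\<lambda>i. c i \<cdot>\<^sub>v vec n (f i))"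
    by (rule eq_matI) auto
  moreover have "mat n n (\<lambda>(j,k). f j k) = mat\<^sub>r n n (\<lambda>i. vec n (f i))"
    by (rule eq_matI) auto
  ultimately show ?thesis
    using det_rows_mul[OF rows, of c] by (simp add: atLeast0LessThan)
qed

definition vandermonde_mat :: "nat \<Rightarrow> (nat \<Rightarrow> 'a :: comm_ring_1) \<Rightarrow> 'a mat" where
  "vandermonde_mat n x = mat n n (\<lambda>(j,i). x j ^ i)"

lemma vandermonde_mat_carrier [simp]: "vandermonde_mat n x \<in> carrier_mat n n"
  by (simp add: vandermonde_mat_def)

text \<open>Multiplying by the bidiagonal matrix with entries 1 and -x n on the right replaces
  the column x j ^ s by (x j - x n) * x j ^ (s - 1) for s > 0, so the last row becomes (1, 0, ..., 0).\<close>
lemma det_vandermonde_mat: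
  fixes x :: "nat \<Rightarrow> 'a :: comm_ring_1"
  shows "det (vandermonde_mat n x) = (\<Prod>k<n. \<Prod>j<k. x k - x j)"
proof (induction n)
  case 0
  then show ?case by (simp add: vandermonde_mat_def)
next
  case (Suc n)
  define V where "V = vandermonde_mat (Suc n) x"
  define E :: "'a mat" where
    "E = mat (Suc n) (Suc n) (\<lambda>(r,s). if r = s then 1 else if s = Suc r then - x n else 0)"
  define W where "W = V * E"
  have E: "E \<in> carrier_mat (Suc n) (Suc n)" and V: "V \<in> carrier_mat (Suc n) (Suc n)"
    by (simp_all add: E_def V_def)
  then have W: "W \<in> carrier_mat (Suc n) (Suc n)" by (simp add: W_def)
  have "det E = 1"
  proof -
    have "upper_triangular E" unfolding upper_triangular_def E_def by auto
    then have "det E = prod_list (diag_mat E)" using det_upper_triangular E by blast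
    also have "\<dots> = 1" unfolding prod_list_diag_prod by (simp add: E_def)
    finally show ?thesis .
  qed
  then have "det V = det W"
    unfolding W_def using det_mult[OF V E] by simp
  have W_entry: "W $$ (j,s) = (if s = 0 then 1 else (x j - x n) * x j ^ (s - 1))"
    if "j < Suc n" "s < Suc n" for j s
  proof -
    have "W $$ (j,s) = (\<Sum>r<Suc n. x j ^ r * (if r = s then 1 else if s = Suc r then - x n else 0))"
      using that unfolding W_def V_def vandermonde_mat_def E_def
      by (simp add: scalar_prod_def atLeast0LessThan)
    also have "\<dots> = (\<Sum>r<Suc n. (if r = s then x j ^ r else 0) + (if Suc r = s then - x n * x j ^ r else 0))"
      by (rule sum.cong) auto
    also have "\<dots> = (if s = 0 then 1 else (x j - x n) * x j ^ (s - 1))"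
      using that by (cases s) (auto simp: sum.distrib algebra_simps, metis less_antisym Suc_mono power_Suc)
    finally show ?thesis .
  qed
  have minor: "mat_delete W n 0 = mat n n (\<lambda>(j,s). (x j - x n) * x j ^ s)"
    by (rule eq_matI) (use W in \<open>auto simp: mat_delete_def W_entry\<close>)
  have "det W = (\<Sum>s<Suc n. W $$ (n,s) * cofactor W n s)"
    by (rule laplace_expansion_row[OF W]) simp
  also have "\<dots> = cofactor W n 0"
    by (simp add: W_entry sum.lessThan_Suc_shift del: sum.lessThan_Suc)
  also have "\<dots> = (-1)^n * det (mat n n (\<lambda>(j,s). (x j - x n) * x j ^ s))"
    by (simp add: cofactor_def minor)
  also have "\<dots> = (-1)^n * (\<Prod>j<n. x j - x n) * det (vandermonde_mat n x)"
    unfolding vandermonde_mat_def det_mat_scale_rows by simp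
  also have "(-1)^n * (\<Prod>j<n. x j - x n) = (\<Prod>j<n. (-1) * (x j - x n))"
    unfolding prod.distrib by simp
  also have "\<dots> = (\<Prod>j<n. x n - x j)"
    by simp
  finally show ?case
    using \<open>det V = det W\<close> Suc.IH by (simp add: V_def mult.commute)
qed

lemma det_mat_poly_eval:
  fixes p :: "nat \<Rightarrow> 'a :: comm_ring_1 poly"
  assumes deg: "\<And>k. k < n \<Longrightarrow> degree (p k) \<le> k"
  shows "det (mat n n (\<lambda>(j,k). poly (p k) (x j))) = (\<Prod>k<n. coeff (p k) k) * det (vandermonde_mat n x)"
proof -
  define C where "C = mat n n (\<lambda>(i,k). coeff (p k) i)"
  have C: "C \<in> carrier_mat n n" by (simp add: C_def)
  have "mat n n (\<lambda>(j,k). poly (p k) (x j)) = vandermonde_mat n x * C"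
  proof (rule eq_matI)
    fix j k assume "j < dim_row (vandermonde_mat n x * C)" "k < dim_col (vandermonde_mat n x * C)"
    then have j: "j < n" and k: "k < n" by (auto simp: C_def vandermonde_mat_def)
    have "(vandermonde_mat n x * C) $$ (j,k) = (\<Sum>i<n. coeff (p k) i * x j ^ i)"
      using j k by (simp add: vandermonde_mat_def C_def scalar_prod_def atLeast0LessThan mult.commute)
    also have "\<dots> = (\<Sum>i\<le>degree (p k). coeff (p k) i * x j ^ i)"
      using deg[OF k] k by (intro sum.mono_neutral_right) (auto simp: coeff_eq_0)
    also have "\<dots> = poly (p k) (x j)" by (simp add: poly_altdef)
    finally show "mat n n (\<lambda>(j,k). poly (p k) (x j)) $$ (j,k) = (vandermonde_mat n x * C) $$ (j,k)"
      using j k by simp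
  qed (auto simp: C_def vandermonde_mat_def)
  moreover have "upper_triangular C"
    unfolding upper_triangular_def C_def
  proof (intro allI impI)
    fix i k assume "i < dim_row (mat n n (\<lambda>(i,k). coeff (p k) i))" "k < i"
    then show "mat n n (\<lambda>(i,k). coeff (p k) i) $$ (i,k) = 0"
      using deg[of k] by (auto intro: coeff_eq_0)
  qed
  then have "det C = (\<Prod>k<n. coeff (p k) k)"
    using det_upper_triangular[OF _ C] unfolding prod_list_diag_prod by (simp add: C_def atLeast0LessThan)
  ultimately show ?thesis
    using det_mult[OF vandermonde_mat_carrier C] by simp
qed

definition dot :: "nat \<Rightarrow> (nat \<Rightarrow> real) \<Rightarrow> (nat \<Rightarrow> real) \<Rightarrow> real" where
  "dot n u v = (\<Sum>j<n. u j * v j)"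

lemma dot_commute: "dot n u v = dot n v u"
  unfolding dot_def by (simp add: mult.commute)

lemma dot_self_nonneg: "0 \<le> dot n u u"
  unfolding dot_def by (auto intro: sum_nonneg)

lemma dot_self_eq_0_imp: "dot n u u = 0 \<Longrightarrow> j < n \<Longrightarrow> u j = 0"
  unfolding dot_def by (subst (asm) sum_nonneg_eq_0_iff) auto

lemma dot_sum_left: "dot n (\<lambda>j. \<Sum>l\<in>S. c l * v l j) u = (\<Sum>l\<in>S. c l * dot n (v l) u)"
  unfolding dot_def by (simp add: sum_distrib_left sum_distrib_right sum.swap[of _ S] mult.assoc)

lemma dot_diff_left: "dot n (\<lambda>j. u j - w j) v = dot n u v - dot n w v"
  unfolding dot_def by (simp add: left_diff_distrib sum_subtractf)

lemma dot_add_self: "dot n (\<lambda>j. u j + v j) (\<lambda>j. u j + v j) = dot n u u + 2 * dot n u v + dot n v v"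
  unfolding dot_def by (simp add: algebra_simps sum.distrib sum_distrib_left)

text \<open>A row l with dot n (Q l) (Q l) = 0 vanishes, so the division by 0 there is harmless.\<close>
definition gram_schmidt_step :: "nat \<Rightarrow> (nat \<Rightarrow> nat \<Rightarrow> real) \<Rightarrow> nat \<Rightarrow> nat \<Rightarrow> nat \<Rightarrow> real" where
  "gram_schmidt_step n Q k =
     Q(k := (\<lambda>j. Q k j - (\<Sum>l<k. dot n (Q k) (Q l) / dot n (Q l) (Q l) * Q l j)))"

fun gram_schmidt_rows :: "nat \<Rightarrow> (nat \<Rightarrow> nat \<Rightarrow> real) \<Rightarrow> nat \<Rightarrow> nat \<Rightarrow> nat \<Rightarrow> real" where
  "gram_schmidt_rows n a 0 = a"
| "gram_schmidt_rows n a (Suc k) = gram_schmidt_step n (gram_schmidt_rows n a k) k"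

lemma det_gram_schmidt_step:
  assumes "k < n"
  shows "det (mat n n (case_prod (gram_schmidt_step n Q k))) = det (mat n n (case_prod Q))"
proof -
  define c where "c l = dot n (Q k) (Q l) / dot n (Q l) (Q l)" for l
  define E :: "real mat" where
    "E = mat n n (\<lambda>(r,s). if r = k then (if s = k then 1 else if s < k then - c s else 0)
                          else (if r = s then 1 else 0))"
  have E: "E \<in> carrier_mat n n" and Q: "mat n n (case_prod Q) \<in> carrier_mat n n"
    by (simp_all add: E_def)
  have "det E = prod_list (diag_mat E)"
    by (rule det_lower_triangular[OF _ E]) (auto simp: E_def)
  then have "det E = 1"
    unfolding prod_list_diag_prod by (auto simp: E_def intro!: prod.neutral)
  moreover have "mat n n (case_prod (gram_schmidt_step n Q k)) = E * mat n n (case_prod Q)"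
  proof (rule eq_matI)
    fix r j assume "r < dim_row (E * mat n n (case_prod Q))" "j < dim_col (E * mat n n (case_prod Q))"
    then have r: "r < n" and j: "j < n" by (auto simp: E_def)
    have "{..<n} \<inter> {s. s < k} = {..<k}"
      using \<open>k < n\<close> by auto
    have "(E * mat n n (case_prod Q)) $$ (r,j) = (\<Sum>s<n. E $$ (r,s) * Q s j)"
      using r j by (simp add: E_def scalar_prod_def atLeast0LessThan)
    also have "\<dots> = (\<Sum>s<n. (if s = r then Q r j else 0)
                        - (if r = k \<and> s < k then c s * Q s j else 0))"
      using r by (intro sum.cong) (auto simp: E_def)
    also have "\<dots> = Q r j - (if r = k then (\<Sum>s<k. c s * Q s j) else 0)"
      using r \<open>k < n\<close> by (simp add: sum_subtractf sum.If_cases \<open>{..<n} \<inter> {s. s < k} = {..<k}\<close>)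
    also have "\<dots> = gram_schmidt_step n Q k r j"
      by (simp add: gram_schmidt_step_def c_def)
    finally show "mat n n (case_prod (gram_schmidt_step n Q k)) $$ (r,j) = (E * mat n n (case_prod Q)) $$ (r,j)"
      using r j by simp
  qed (auto simp: E_def)
  ultimately show ?thesis
    using det_mult[OF E Q] by simp
qed

lemma gram_schmidt_step_row:
  fixes Q :: "nat \<Rightarrow> nat \<Rightarrow> real"
  assumes orth: "\<And>s l. s < k \<Longrightarrow> l < k \<Longrightarrow> s \<noteq> l \<Longrightarrow> dot n (Q s) (Q l) = 0"
  defines "q \<equiv> gram_schmidt_step n Q k k"
  shows "\<And>l. l < k \<Longrightarrow> dot n q (Q l) = 0"
    and "dot n q q \<le> dot n (Q k) (Q k)"
proof -
  define c where "c l = dot n (Q k) (Q l) / dot n (Q l) (Q l)" for l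
  define P where "P j = (\<Sum>l<k. c l * Q l j)" for j
  have q: "q = (\<lambda>j. Q k j - P j)"
    by (simp add: q_def gram_schmidt_step_def P_def c_def)
  show orth_q: "dot n q (Q l) = 0" if "l < k" for l
  proof -
    have "dot n q (Q l) = dot n (Q k) (Q l) - (\<Sum>s<k. c s * dot n (Q s) (Q l))"
      unfolding q P_def dot_diff_left dot_sum_left ..
    also have "(\<Sum>s<k. c s * dot n (Q s) (Q l)) = c l * dot n (Q l) (Q l)"
      using that orth by (subst sum.remove[of _ l]) (auto intro!: sum.neutral)
    also have "dot n (Q k) (Q l) - c l * dot n (Q l) (Q l) = 0"
    proof (cases "dot n (Q l) (Q l) = 0")
      case True
      then have "\<forall>j<n. Q l j = 0"
        using dot_self_eq_0_imp by blast
      then have "dot n (Q k) (Q l) = 0"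
        by (simp add: dot_def)
      then show ?thesis using True by simp
    qed (simp add: c_def)
    finally show ?thesis .
  qed
  have "dot n q P = dot n P q" by (rule dot_commute)
  also have "\<dots> = (\<Sum>l<k. c l * dot n (Q l) q)" unfolding P_def dot_sum_left ..
  also have "\<dots> = 0" using orth_q by (simp add: dot_commute)
  finally show "dot n q q \<le> dot n (Q k) (Q k)"
    using dot_add_self[of n q P] dot_self_nonneg[of n P] by (simp add: q)
qed

lemma gram_schmidt_rows_unchanged: "k \<le> i \<Longrightarrow> gram_schmidt_rows n a k i = a i"
  by (induction k) (auto simp: gram_schmidt_step_def)

lemma gram_schmidt_rows_orthogonal:
  "l < i \<Longrightarrow> i < k \<Longrightarrow> dot n (gram_schmidt_rows n a k i) (gram_schmidt_rows n a k l) = 0"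
proof (induction k arbitrary: i l)
  case 0
  then show ?case by simp
next
  case (Suc k)
  define Q where "Q = gram_schmidt_rows n a k"
  have orth: "dot n (Q s) (Q l) = 0" if "s < k" "l < k" "s \<noteq> l" for s l
    using Suc.IH[of l s] Suc.IH[of s l] that by (cases "s < l") (auto simp: Q_def dot_commute)
  show ?case
  proof (cases "i = k")
    case True
    then show ?thesis
      using gram_schmidt_step_row(1)[of k n Q, OF orth] Suc.prems by (simp add: Q_def gram_schmidt_step_def)
  next
    case False
    then show ?thesis
      using Suc.IH[of l i] Suc.prems by (simp add: Q_def gram_schmidt_step_def)
  qed
qed

lemma gram_schmidt_rows_dot_self_le:
  "dot n (gram_schmidt_rows n a k i) (gram_schmidt_rows n a k i) \<le> dot n (a i) (a i)"
proof (induction k)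
  case 0
  then show ?case by simp
next
  case (Suc k)
  define Q where "Q = gram_schmidt_rows n a k"
  have orth: "dot n (Q s) (Q l) = 0" if "s < k" "l < k" "s \<noteq> l" for s l
    using gram_schmidt_rows_orthogonal[of l s k] gram_schmidt_rows_orthogonal[of s l k] that
    by (cases "s < l") (auto simp: Q_def dot_commute)
  show ?case
    using gram_schmidt_step_row(2)[of k n Q, OF orth] gram_schmidt_rows_unchanged[of k k n a] Suc.IH
    by (cases "i = k") (simp_all add: Q_def gram_schmidt_step_def)
qed

lemma det_gram_schmidt_rows:
  "k \<le> n \<Longrightarrow> det (mat n n (case_prod (gram_schmidt_rows n a k))) = det (mat n n (case_prod a))"
  by (induction k) (simp_all add: det_gram_schmidt_step)

theorem hadamard_inequality:
  fixes A :: "real mat"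
  assumes A: "A \<in> carrier_mat n n"
  shows "(det A)^2 \<le> (\<Prod>i<n. \<Sum>j<n. (A $$ (i,j))^2)"
proof -
  define a where "a i j = A $$ (i,j)" for i j
  define M where "M = mat n n (case_prod (gram_schmidt_rows n a n))"
  have M: "M \<in> carrier_mat n n" and MT: "transpose_mat M \<in> carrier_mat n n"
    by (simp_all add: M_def)
  have gram: "M * transpose_mat M = mat n n (\<lambda>(i,l). dot n (gram_schmidt_rows n a n i) (gram_schmidt_rows n a n l))"
    by (rule eq_matI) (auto simp: M_def dot_def scalar_prod_def atLeast0LessThan)
  then have "upper_triangular (M * transpose_mat M)"
    unfolding upper_triangular_def by (auto intro: gram_schmidt_rows_orthogonal)
  then have "det (M * transpose_mat M) = (\<Prod>i<n. dot n (gram_schmidt_rows n a n i) (gram_schmidt_rows n a n i))"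
    using det_upper_triangular[OF _ mult_carrier_mat[OF M MT]]
    unfolding prod_list_diag_prod gram by (simp add: atLeast0LessThan)
  moreover have "det (M * transpose_mat M) = (det A)^2"
  proof -
    have "mat n n (case_prod a) = A"
      using A by (auto simp: a_def)
    then have "det M = det A"
      unfolding M_def using det_gram_schmidt_rows[of n n a] by simp
    then show ?thesis
      using det_mult[OF M MT] det_transpose[OF M] by (simp add: power2_eq_square)
  qed
  moreover have "(\<Prod>i<n. dot n (gram_schmidt_rows n a n i) (gram_schmidt_rows n a n i))
      \<le> (\<Prod>i<n. dot n (a i) (a i))"
    by (intro prod_mono conjI dot_self_nonneg gram_schmidt_rows_dot_self_le)
  ultimately show ?thesis
    by (simp add: dot_def a_def power2_eq_square)
qed

section \<open>Chebyshev polynomials\<close>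

text \<open>For q = X, 2 X, 2 X - 1 and 2 X + 1 these are the Chebyshev polynomials of the first,
  second, third and fourth kind.\<close>
fun cheb_poly :: "real poly \<Rightarrow> nat \<Rightarrow> real poly" where
  "cheb_poly q 0 = 1"
| "cheb_poly q (Suc 0) = q"
| "cheb_poly q (Suc (Suc k)) = [:0, 2:] * cheb_poly q (Suc k) - cheb_poly q k"

lemma cheb_poly_degree_coeff:
  assumes "degree q \<le> 1"
  shows "degree (cheb_poly q k) \<le> k \<and> degree (cheb_poly q (Suc k)) \<le> Suc k \<and>
         coeff (cheb_poly q (Suc k)) (Suc k) = 2^k * coeff q 1"
proof (induction k)
  case 0
  then show ?case using assms by simp
next
  case (Suc k)
  have times_2X: "[:0, 2:] * p = pCons 0 (Polynomial.smult 2 p)" for p :: "real poly"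
    by simp
  have "degree ([:0, 2:] * cheb_poly q (Suc k)) \<le> Suc (Suc k)"
    unfolding times_2X using Suc.IH degree_pCons_le[of 0 "Polynomial.smult 2 (cheb_poly q (Suc k))"] by simp
  moreover have "degree (cheb_poly q k) \<le> Suc (Suc k)"
    using Suc.IH by simp
  ultimately have "degree (cheb_poly q (Suc (Suc k))) \<le> Suc (Suc k)"
    by (simp add: degree_diff_le)
  moreover have "coeff (cheb_poly q k) (Suc (Suc k)) = 0"
    using Suc.IH by (intro coeff_eq_0) simp
  then have "coeff (cheb_poly q (Suc (Suc k))) (Suc (Suc k)) = 2^Suc k * coeff q 1"
    unfolding cheb_poly.simps times_2X using Suc.IH by simp
  ultimately show ?case
    using Suc.IH by simp
qed

lemma degree_cheb_poly: "degree q \<le> 1 \<Longrightarrow> degree (cheb_poly q k) \<le> k"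
  using cheb_poly_degree_coeff by blast

lemma lead_coeff_cheb_poly_Suc: "degree q \<le> 1 \<Longrightarrow> coeff (cheb_poly q (Suc k)) (Suc k) = 2^k * coeff q 1"
  using cheb_poly_degree_coeff by blast

lemma cheb_poly_cos:
  fixes f :: "nat \<Rightarrow> real"
  assumes "f 0 = w" and "f 1 = w * poly q (cos t)"
    and "\<And>k. f (Suc (Suc k)) = 2 * cos t * f (Suc k) - f k"
  shows "f k = w * poly (cheb_poly q k) (cos t)"
proof -
  have "f k = w * poly (cheb_poly q k) (cos t) \<and> f (Suc k) = w * poly (cheb_poly q (Suc k)) (cos t)"
  proof (induction k)
    case 0
    then show ?case using assms(1,2) by simp
  next
    case (Suc k)
    then show ?case using assms(3)[of k] by (simp add: algebra_simps)
  qed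
  then show ?thesis by simp
qed

lemma cos_mult_eq_cheb_poly: "cos (real k * t) = poly (cheb_poly [:0, 1:] k) (cos t)"
proof -
  have "cos (real (Suc (Suc k)) * t) = 2 * cos t * cos (real (Suc k) * t) - cos (real k * t)" for k
  proof -
    have "cos (real (Suc (Suc k)) * t) = cos (real (Suc k) * t + t)"
     and "cos (real k * t) = cos (real (Suc k) * t - t)"
      by (simp_all add: algebra_simps)
    then show ?thesis
      by (simp only: cos_add cos_diff) simp
  qed
  then show ?thesis
    using cheb_poly_cos[where f = "\<lambda>k. cos (real k * t)" and w = 1 and q = "[:0, 1:]"] by simp
qed

lemma sin_mult_eq_cheb_poly: "sin (real (Suc k) * t) = sin t * poly (cheb_poly [:0, 2:] k) (cos t)"
proof (rule cheb_poly_cos[where f = "\<lambda>k. sin (real (Suc k) * t)"])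
  show "sin (real (Suc 1) * t) = sin t * poly [:0, 2:] (cos t)"
    by (simp add: sin_double)
  fix k
  have "sin (real (Suc (Suc (Suc k))) * t) = sin (real (Suc (Suc k)) * t + t)"
   and "sin (real (Suc k) * t) = sin (real (Suc (Suc k)) * t - t)"
    by (simp_all add: algebra_simps)
  then show "sin (real (Suc (Suc (Suc k))) * t)
      = 2 * cos t * sin (real (Suc (Suc k)) * t) - sin (real (Suc k) * t)"
    by (simp only: sin_add sin_diff) simp
qed simp

lemma cos_half_eq_cheb_poly: "cos ((real k + 1/2) * t) = cos (t/2) * poly (cheb_poly [:-1, 2:] k) (cos t)"
proof (rule cheb_poly_cos[where f = "\<lambda>k. cos ((real k + 1/2) * t)"])
  have cos_t: "cos t = 2 * cos (t/2)^2 - 1"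
    using cos_double_cos[of "t/2"] by simp
  have "cos ((1 + 1/2) * t) = cos (3 * (t/2))"
    by (simp add: algebra_simps)
  also have "\<dots> = cos (t/2) * (2 * cos t - 1)"
    unfolding cos_treble_cos cos_t by (simp add: algebra_simps power2_eq_square power3_eq_cube)
  finally show "cos ((real 1 + 1/2) * t) = cos (t/2) * poly [:-1, 2:] (cos t)"
    by (simp add: algebra_simps)
  fix k
  have "cos ((real (Suc (Suc k)) + 1/2) * t) = cos ((real (Suc k) + 1/2) * t + t)"
   and "cos ((real k + 1/2) * t) = cos ((real (Suc k) + 1/2) * t - t)"
    by (simp_all add: algebra_simps)
  then show "cos ((real (Suc (Suc k)) + 1/2) * t)
      = 2 * cos t * cos ((real (Suc k) + 1/2) * t) - cos ((real k + 1/2) * t)"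
    by (simp only: cos_add cos_diff) simp
qed simp

lemma sin_half_eq_cheb_poly: "sin ((real k + 1/2) * t) = sin (t/2) * poly (cheb_poly [:1, 2:] k) (cos t)"
proof (rule cheb_poly_cos[where f = "\<lambda>k. sin ((real k + 1/2) * t)"])
  have cos_t: "cos t = 2 * cos (t/2)^2 - 1"
    using cos_double_cos[of "t/2"] by simp
  have "sin ((1 + 1/2) * t) = sin (2 * (t/2) + t/2)"
    by (simp add: algebra_simps)
  also have "\<dots> = 2 * sin (t/2) * cos (t/2) * cos (t/2) + cos t * sin (t/2)"
    unfolding sin_add sin_double by simp
  also have "\<dots> = sin (t/2) * (2 * cos t + 1)"
    unfolding cos_t by (simp add: algebra_simps power2_eq_square)
  finally show "sin ((real 1 + 1/2) * t) = sin (t/2) * poly [:1, 2:] (cos t)"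
    by (simp add: algebra_simps)
  fix k
  have "sin ((real (Suc (Suc k)) + 1/2) * t) = sin ((real (Suc k) + 1/2) * t + t)"
   and "sin ((real k + 1/2) * t) = sin ((real (Suc k) + 1/2) * t - t)"
    by (simp_all add: algebra_simps)
  then show "sin ((real (Suc (Suc k)) + 1/2) * t)
      = 2 * cos t * sin ((real (Suc k) + 1/2) * t) - sin ((real k + 1/2) * t)"
    by (simp only: sin_add sin_diff) simp
qed simp

section \<open>Bounding the densities\<close>

lemma vdm_sq_eq_det_sq: "vdm_sq n th = (det (vandermonde_mat n (\<lambda>j. cos (th j))))^2"
  unfolding vdm_sq_def det_vandermonde_mat prod_power_distrib by (simp add: power2_commute)

lemma weighted_vdm_sq_le:
  fixes w :: "real \<Rightarrow> real" and q :: "real poly"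
  assumes deg: "degree q \<le> 1"
    and bnd: "\<And>k t. \<bar>w t * poly (cheb_poly q k) (cos t)\<bar> \<le> 1"
  shows "(\<Prod>j<n. w (th j)^2) * vdm_sq n th * (\<Prod>k<n. coeff (cheb_poly q k) k)^2 \<le> real n ^ n"
proof -
  define A where "A = mat n n (\<lambda>(j,k). w (th j) * poly (cheb_poly q k) (cos (th j)))"
  have "det A = (\<Prod>j<n. w (th j)) * det (mat n n (\<lambda>(j,k). poly (cheb_poly q k) (cos (th j))))"
    unfolding A_def by (rule det_mat_scale_rows)
  also have "\<dots> = (\<Prod>j<n. w (th j)) * ((\<Prod>k<n. coeff (cheb_poly q k) k)
      * det (vandermonde_mat n (\<lambda>j. cos (th j))))"
    by (subst det_mat_poly_eval) (simp_all add: degree_cheb_poly[OF deg])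
  finally have "det A = (\<Prod>j<n. w (th j)) * ((\<Prod>k<n. coeff (cheb_poly q k) k)
      * det (vandermonde_mat n (\<lambda>j. cos (th j))))" .
  then have "(\<Prod>j<n. w (th j)^2) * vdm_sq n th * (\<Prod>k<n. coeff (cheb_poly q k) k)^2 = (det A)^2"
    by (simp add: vdm_sq_eq_det_sq power_mult_distrib prod_power_distrib)
  also have "\<dots> \<le> (\<Prod>i<n. \<Sum>j<n. (A $$ (i,j))^2)"
    by (rule hadamard_inequality) (simp add: A_def)
  also have "\<dots> \<le> (\<Prod>i<n. real n)"
  proof (rule prod_mono)
    fix i assume "i \<in> {..<n}"
    then have "(A $$ (i,j))^2 \<le> 1" if "j < n" for j
      using bnd that by (simp add: A_def abs_square_le_1)
    then have "(\<Sum>j<n. (A $$ (i,j))^2) \<le> (\<Sum>j<n. 1)"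
      by (intro sum_mono) auto
    then show "0 \<le> (\<Sum>j<n. (A $$ (i,j))^2) \<and> (\<Sum>j<n. (A $$ (i,j))^2) \<le> real n"
      by (auto intro: sum_nonneg)
  qed
  finally show ?thesis by simp
qed

lemma prod_power_two_sq: "(\<Prod>k<n. (2::real)^k)^2 * 2^n = 2^(n^2)"
proof (induction n)
  case 0
  then show ?case by simp
next
  case (Suc n)
  have "(\<Prod>k<Suc n. (2::real)^k)^2 * 2^Suc n = ((\<Prod>k<n. (2::real)^k)^2 * 2^n) * 2^(2*n+1)"
    by (simp add: power2_eq_square power_add mult_ac) (simp add: power_mult power2_eq_square)
  also have "\<dots> = 2^(n^2 + (2*n+1))"
    unfolding Suc.IH by (rule power_add[symmetric])
  also have "n^2 + (2*n+1) = Suc n ^ 2"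
    by (simp add: power2_eq_square)
  finally show ?case .
qed

lemma weighted_vdm_sq_le_lead_two:
  fixes w :: "real \<Rightarrow> real" and q :: "real poly"
  assumes deg: "degree q \<le> 1" and lead: "coeff q 1 = 2"
    and bnd: "\<And>k t. \<bar>w t * poly (cheb_poly q k) (cos t)\<bar> \<le> 1"
  shows "2 ^ (n^2) * (\<Prod>j<n. w (th j)^2) * vdm_sq n th \<le> 2^n * real n ^ n"
proof -
  have "coeff (cheb_poly q k) k = 2^k" for k
    using lead_coeff_cheb_poly_Suc[OF deg] lead by (cases k) simp_all
  then have bound: "(\<Prod>j<n. w (th j)^2) * vdm_sq n th * (\<Prod>k<n. (2::real)^k)^2 \<le> real n ^ n"
    using weighted_vdm_sq_le[OF deg bnd, of th n] by simp
  have "2 ^ (n^2) * (\<Prod>j<n. w (th j)^2) * vdm_sq n th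
      = (\<Prod>j<n. w (th j)^2) * vdm_sq n th * (\<Prod>k<n. (2::real)^k)^2 * 2^n"
    unfolding prod_power_two_sq[symmetric] by (simp add: mult_ac)
  also have "\<dots> \<le> real n ^ n * 2^n"
    using bound by (rule mult_right_mono) simp
  finally show ?thesis by (simp add: mult.commute)
qed

lemma vdm_sq_le:
  assumes "n \<ge> 1"
  shows "2 ^ ((n - 1)^2) * vdm_sq n th \<le> 2 ^ (n - 1) * real n ^ n"
proof -
  obtain m where n: "n = Suc m" using assms by (cases n) auto
  have "(\<Prod>k<n. coeff (cheb_poly [:0, 1:] k) k) = (\<Prod>k<m. (2::real)^k)"
    unfolding n prod.lessThan_Suc_shift by (simp add: lead_coeff_cheb_poly_Suc)
  then have bound: "vdm_sq n th * (\<Prod>k<m. (2::real)^k)^2 \<le> real n ^ n"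
    using weighted_vdm_sq_le[where q = "[:0, 1:]" and w = "\<lambda>_. 1" and n = n and th = th]
    by (simp add: abs_cos_le_one flip: cos_mult_eq_cheb_poly)
  have "2 ^ ((n - 1)^2) * vdm_sq n th = vdm_sq n th * (\<Prod>k<m. (2::real)^k)^2 * 2^m"
    unfolding n diff_Suc_1 prod_power_two_sq[symmetric] by (simp add: mult_ac)
  also have "\<dots> \<le> real n ^ n * 2^m"
    using bound by (rule mult_right_mono) simp
  finally show ?thesis by (simp add: n mult.commute)
qed

lemma rho_le:
  assumes "n \<ge> 1"
  shows "rho n a b th \<le> 2^n * real n ^ n / (fact n * pi ^ n)"
proof -
  have pp: "2 ^ (n^2) * (\<Prod>j<n. sin (th j)^2) * vdm_sq n th \<le> 2^n * real n ^ n"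
    by (rule weighted_vdm_sq_le_lead_two[where q = "[:0, 2:]"])
      (simp_all add: abs_sin_le_one flip: sin_mult_eq_cheb_poly)
  have mp: "2 ^ (n^2) * (\<Prod>j<n. cos (th j / 2)^2) * vdm_sq n th \<le> 2^n * real n ^ n"
    by (rule weighted_vdm_sq_le_lead_two[where q = "[:-1, 2:]" and w = "\<lambda>t. cos (t/2)"])
      (simp_all add: abs_cos_le_one flip: cos_half_eq_cheb_poly)
  have pm: "2 ^ (n^2) * (\<Prod>j<n. sin (th j / 2)^2) * vdm_sq n th \<le> 2^n * real n ^ n"
    by (rule weighted_vdm_sq_le_lead_two[where q = "[:1, 2:]" and w = "\<lambda>t. sin (t/2)"])
      (simp_all add: abs_sin_le_one flip: sin_half_eq_cheb_poly)
  have "2 ^ ((n - 1)^2) * vdm_sq n th \<le> 2^n * real n ^ n"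
  proof -
    have "(2::real) ^ (n - 1) \<le> 2 ^ n" by (rule power_increasing) simp_all
    then have "2 ^ (n - 1) * real n ^ n \<le> 2^n * real n ^ n" by (rule mult_right_mono) simp
    with vdm_sq_le[OF assms, of th] show ?thesis by linarith
  qed
  with pp mp pm show ?thesis
    unfolding rho_def by (simp add: divide_right_mono)
qed

lemma pow_div_fact_le_stirling:
  assumes "n \<ge> 1"
  shows "2^n * real n ^ n / (fact n * pi ^ n) \<le> (2 * exp 1 / pi) ^ n / sqrt (2 * pi * n)"
proof -
  have S: "sqrt (2 * pi * real n) > 0" using assms by simp
  have "real n ^ n / fact n \<le> exp 1 ^ n / sqrt (2 * pi * real n)"
    using fact_lower_bound_stirling[OF assms] S by (simp add: field_simps)
  then have "2^n / pi^n * (real n ^ n / fact n) \<le> 2^n / pi^n * (exp 1 ^ n / sqrt (2 * pi * real n))"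
    by (rule mult_left_mono) simp
  then show ?thesis
    by (simp add: power_divide power_mult_distrib mult.commute)
qed

theorem lemma4p1:
  fixes n :: nat and a b :: real
  assumes "n \<ge> 1"
    and "a \<in> {-1/2, 1/2}" and "b \<in> {-1/2, 1/2}"
  shows "(SUP th\<in>{th. \<forall>j<n. th j \<in> {0..pi}} \<inter> {th. \<forall>j\<ge>n. th j = 0}. rho n a b th)
           \<le> (2 * exp 1 / pi) ^ n / sqrt (2 * pi * n)"
proof (rule cSUP_least)
  show "{th. \<forall>j<n. th j \<in> {0..pi}} \<inter> {th. \<forall>j\<ge>n. th j = 0} \<noteq> {}"
    using pi_ge_zero by (auto intro!: exI[of _ "\<lambda>_. 0"])
  show "rho n a b th \<le> (2 * exp 1 / pi) ^ n / sqrt (2 * pi * n)" for th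
    using rho_le[OF assms(1)] pow_div_fact_le_stirling[OF assms(1)] by (rule order_trans)
qed

end
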